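(* Let $B\subset\mathbb R^n$ be an $n$-dimensional (closed) ball and, for $i=1,\ldots,n+1$, let $f_i$ be a set-valued map assigning to each $x\in B$ a nonempty subset $f_i(x)\subseteq B$, such that the graph $\{(x,y)\in B\times B: y\in f_i(x)\}$ is closed in $B\times B$. Then there exists $x\in B$ with $x\in f_1(x)*f_2(x)*\cdots*f_{n+1}(x)$.
   Context: For subsets $A_1,\ldots,A_m$ of $\mathbb R^n$, the geometric join $A_1*\cdots*A_m$ is the set of all convex combinations $t_1a_1+\cdots+t_ma_m$ with $a_i\in A_i$, $t_i\ge0$, $\sum_i t_i=1$. *)

theory Defs
  imports "HOL-Analysis.Analysis"
begin

definition geom_join :: "'i set \<Rightarrow> ('i \<Rightarrow> 'a::real_vector set) \<Rightarrow> 'a set" where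
  "geom_join I A = {y. \<exists>t a. (\<forall>i\<in>I. 0 \<le> t i \<and> a i \<in> A i) \<and> sum t I = 1 \<and>
                          y = (\<Sum>i\<in>I. t i *\<^sub>R a i)}"

end

theory Submission
  imports Defs
begin

text \<open>Cover the ball by the open stars of the vertices of a Kuhn (Freudenthal) triangulation
  of mesh \<open>e\<close> and colour a vertex \<open>v \<in> \<int>\<^sup>n\<close> by its coordinate sum modulo \<open>n + 1\<close>. The vertices
  of a simplex then carry distinct colours, so the stars of two vertices of the same colour are
  disjoint. Pick for every vertex \<open>v\<close> a point \<open>y\<^sub>v \<in> f\<^sub>i(p\<^sub>v)\<close>, where \<open>i\<close> is the colour of \<open>v\<close> and
  \<open>p\<^sub>v\<close> lies in the star of \<open>v\<close>, and glue the \<open>y\<^sub>v\<close> with a partition of unity subordinate to the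
  stars. By Brouwer this self-map of the ball has a fixed point \<open>x\<close>, and at \<open>x\<close> at most one
  vertex of each colour carries weight, so \<open>x\<close> lies in the join of the \<open>f\<^sub>i\<close> evaluated at points
  within \<open>O(e)\<close> of \<open>x\<close>. Letting \<open>e \<rightarrow> 0\<close>, compactness and the closed graphs give
  \<open>x \<in> f\<^sub>1(x) * \<dots> * f\<^sub>n\<^sub>+\<^sub>1(x)\<close>.\<close>

lemma finite_family_common_convergent_subseq:
  fixes s :: "'i \<Rightarrow> nat \<Rightarrow> 'a::metric_space"
  assumes "finite I" "compact K" "\<And>i m. i \<in> I \<Longrightarrow> s i m \<in> K"
  obtains r l where "strict_mono r" "\<And>i. i \<in> I \<Longrightarrow> l i \<in> K"
    "\<And>i. i \<in> I \<Longrightarrow> (\<lambda>m. s i (r m)) \<longlonglongrightarrow> l i"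
proof -
  have "\<exists>r l. strict_mono r \<and> (\<forall>i\<in>I. l i \<in> K \<and> (\<lambda>m. s i (r m)) \<longlonglongrightarrow> l i)"
    using assms(1,3)
  proof (induction I rule: finite_induct)
    case empty
    show ?case by (intro exI[of _ id]) (auto simp: strict_mono_def)
  next
    case (insert j I)
    then obtain r l where r: "strict_mono r" and l: "\<forall>i\<in>I. l i \<in> K \<and> (\<lambda>m. s i (r m)) \<longlonglongrightarrow> l i"
      by auto
    have "\<forall>m. s j (r m) \<in> K" using insert.prems by simp
    then obtain lj r' where lj: "lj \<in> K" "strict_mono r'" "((\<lambda>m. s j (r m)) \<circ> r') \<longlonglongrightarrow> lj"
      by (rule seq_compactE[OF compact_imp_seq_compact[OF assms(2)]])
    have "(\<lambda>m. s i (r (r' m))) \<longlonglongrightarrow> l i" if "i \<in> I" for i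
      using LIMSEQ_subseq_LIMSEQ[OF _ lj(2), of "\<lambda>m. s i (r m)"] l that by (simp add: o_def)
    then show ?case
      using lj strict_mono_o[OF r lj(2)] l
      by (intro exI[of _ "r \<circ> r'"] exI[of _ "l(j := lj)"]) (auto simp: o_def)
  qed
  then show ?thesis using that by blast
qed

lemma sum_scaleR_in_geom_join:
  fixes w :: "'v \<Rightarrow> real" and Y :: "'v \<Rightarrow> 'a::real_vector" and \<kappa> :: "'v \<Rightarrow> 'i"
  assumes "finite V" "finite I" "\<kappa> ` V \<subseteq> I"
    and nonneg: "\<And>v. v \<in> V \<Longrightarrow> 0 \<le> w v" and "sum w V = 1"
    and one_per_class: "\<And>u v. u \<in> V \<Longrightarrow> v \<in> V \<Longrightarrow> \<kappa> u = \<kappa> v \<Longrightarrow> w u \<noteq> 0 \<Longrightarrow> w v \<noteq> 0 \<Longrightarrow> u = v"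
    and mem: "\<And>v. v \<in> V \<Longrightarrow> w v \<noteq> 0 \<Longrightarrow> Y v \<in> S (\<kappa> v)"
    and nonempty: "\<And>i. i \<in> I \<Longrightarrow> S i \<noteq> {}"
  shows "(\<Sum>v\<in>V. w v *\<^sub>R Y v) \<in> geom_join I S"
proof -
  define s where "s i = sum w {v\<in>V. \<kappa> v = i}" for i
  have "\<exists>a. a \<in> S i \<and> (\<Sum>v\<in>{v\<in>V. \<kappa> v = i}. w v *\<^sub>R Y v) = s i *\<^sub>R a" if "i \<in> I" for i
  proof (cases "\<exists>u\<in>V. \<kappa> u = i \<and> w u \<noteq> 0")
    case True
    then obtain u where u: "u \<in> V" "\<kappa> u = i" "w u \<noteq> 0" by blast
    let ?V = "{v\<in>V. \<kappa> v = i}"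
    have "u \<in> ?V" "finite ?V" using u \<open>finite V\<close> by auto
    moreover have others: "w v = 0" if "v \<in> ?V - {u}" for v
      using that u one_per_class[of u v] by auto
    ultimately have "s i = w u" "(\<Sum>v\<in>?V. w v *\<^sub>R Y v) = w u *\<^sub>R Y u"
      using sum.mono_neutral_left[of ?V "{u}" w] sum.mono_neutral_left[of ?V "{u}" "\<lambda>v. w v *\<^sub>R Y v"]
      by (auto simp: s_def)
    then show ?thesis using mem u by auto
  next
    case False
    then have "s i = 0" "(\<Sum>v\<in>{v\<in>V. \<kappa> v = i}. w v *\<^sub>R Y v) = 0"
      by (auto simp: s_def intro: sum.neutral)
    then show ?thesis using nonempty[OF that] by auto
  qed
  then obtain a where a: "\<forall>i\<in>I. a i \<in> S i \<and> (\<Sum>v\<in>{v\<in>V. \<kappa> v = i}. w v *\<^sub>R Y v) = s i *\<^sub>R a i"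
    by (metis bchoice)
  have "sum s I = 1"
    using sum.group[OF assms(1-3), of w] \<open>sum w V = 1\<close> by (simp add: s_def)
  moreover have "(\<Sum>v\<in>V. w v *\<^sub>R Y v) = (\<Sum>i\<in>I. s i *\<^sub>R a i)"
    using sum.group[OF assms(1-3), of "\<lambda>v. w v *\<^sub>R Y v"] a by simp
  moreover have "0 \<le> s i" for i
    unfolding s_def using nonneg by (intro sum_nonneg) auto
  ultimately show ?thesis
    using a unfolding geom_join_def by blast
qed

lemma brouwer_partition_of_unity:
  fixes B :: "'a::euclidean_space set" and \<phi> :: "'v \<Rightarrow> 'a \<Rightarrow> real"
  assumes B: "compact B" "convex B" "B \<noteq> {}" and "finite V"
    and cont: "\<And>v. v \<in> V \<Longrightarrow> continuous_on B (\<phi> v)"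
    and nonneg: "\<And>v x. v \<in> V \<Longrightarrow> x \<in> B \<Longrightarrow> 0 \<le> \<phi> v x"
    and cover: "\<And>x. x \<in> B \<Longrightarrow> \<exists>v\<in>V. 0 < \<phi> v x"
    and YB: "\<And>v. v \<in> V \<Longrightarrow> Y v \<in> B"
  obtains x where "x \<in> B" "0 < (\<Sum>v\<in>V. \<phi> v x)"
    "x = (\<Sum>v\<in>V. (\<phi> v x / (\<Sum>u\<in>V. \<phi> u x)) *\<^sub>R Y v)"
proof -
  define \<Phi> where "\<Phi> x = (\<Sum>v\<in>V. \<phi> v x)" for x
  have \<Phi>_pos: "0 < \<Phi> x" if "x \<in> B" for x
  proof -
    obtain v where "v \<in> V" "0 < \<phi> v x" using cover \<open>x \<in> B\<close> by blast
    then show ?thesis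
      unfolding \<Phi>_def using member_le_sum[of v V "\<lambda>v. \<phi> v x"] \<open>finite V\<close> nonneg \<open>x \<in> B\<close>
      by force
  qed
  have weights_sum: "(\<Sum>v\<in>V. \<phi> v x / \<Phi> x) = 1" if "x \<in> B" for x
  proof -
    have "(\<Sum>v\<in>V. \<phi> v x / \<Phi> x) = \<Phi> x / \<Phi> x"
      by (simp add: \<Phi>_def sum_divide_distrib[symmetric])
    with \<Phi>_pos[OF that] show ?thesis by simp
  qed
  define g where "g x = (\<Sum>v\<in>V. (\<phi> v x / \<Phi> x) *\<^sub>R Y v)" for x
  have "continuous_on B g"
    unfolding g_def \<Phi>_def using \<Phi>_pos
    by (intro continuous_intros cont) (auto simp: \<Phi>_def dest: less_imp_neq[symmetric])
  moreover have "g \<in> B \<rightarrow> B"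
    unfolding g_def using weights_sum \<Phi>_pos YB nonneg
    by (intro Pi_I convex_sum \<open>finite V\<close> B(2)) (auto intro!: divide_nonneg_pos)
  ultimately obtain x where "x \<in> B" "g x = x"
    using brouwer[OF B] by blast
  with \<Phi>_pos show ?thesis
    using that by (simp add: g_def \<Phi>_def)
qed

lemma join_approx_of_coloured_partition:
  fixes B :: "'a::euclidean_space set" and \<phi> :: "'v \<Rightarrow> 'a \<Rightarrow> real"
    and \<kappa> :: "'v \<Rightarrow> 'i" and f :: "'i \<Rightarrow> 'a \<Rightarrow> 'a set"
  assumes B: "compact B" "convex B" "B \<noteq> {}"
    and V: "finite V" "finite I" "\<kappa> ` V \<subseteq> I"
    and cont: "\<And>v. v \<in> V \<Longrightarrow> continuous_on B (\<phi> v)"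
    and nonneg: "\<And>v x. v \<in> V \<Longrightarrow> x \<in> B \<Longrightarrow> 0 \<le> \<phi> v x"
    and cover: "\<And>x. x \<in> B \<Longrightarrow> \<exists>v\<in>V. 0 < \<phi> v x"
    and colour_unique: "\<And>v w x. v \<in> V \<Longrightarrow> w \<in> V \<Longrightarrow> x \<in> B \<Longrightarrow> \<kappa> v = \<kappa> w \<Longrightarrow>
        0 < \<phi> v x \<Longrightarrow> 0 < \<phi> w x \<Longrightarrow> v = w"
    and small: "\<And>v x y. v \<in> V \<Longrightarrow> x \<in> B \<Longrightarrow> y \<in> B \<Longrightarrow> 0 < \<phi> v x \<Longrightarrow> 0 < \<phi> v y \<Longrightarrow>
        dist x y \<le> \<delta>"
    and nonempty: "\<And>i x. i \<in> I \<Longrightarrow> x \<in> B \<Longrightarrow> f i x \<noteq> {}"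
    and into: "\<And>i x. i \<in> I \<Longrightarrow> x \<in> B \<Longrightarrow> f i x \<subseteq> B"
  shows "\<exists>x\<in>B. x \<in> geom_join I (\<lambda>i. \<Union>p\<in>B \<inter> cball x \<delta>. f i p)"
proof -
  have "\<exists>y. y \<in> B \<and> (\<forall>p\<in>B. 0 < \<phi> v p \<longrightarrow> (\<exists>p'\<in>B. 0 < \<phi> v p' \<and> y \<in> f (\<kappa> v) p'))"
    if "v \<in> V" for v
  proof (cases "\<exists>p\<in>B. 0 < \<phi> v p")
    case True
    then obtain p where p: "p \<in> B" "0 < \<phi> v p" by blast
    moreover have "\<kappa> v \<in> I" using that V(3) by blast
    ultimately obtain y where "y \<in> f (\<kappa> v) p" "y \<in> B" using nonempty into by blast
    with p show ?thesis by blast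
  next
    case False
    then show ?thesis using B(3) by blast
  qed
  then obtain Y where "\<forall>v\<in>V. Y v \<in> B \<and>
      (\<forall>p\<in>B. 0 < \<phi> v p \<longrightarrow> (\<exists>p'\<in>B. 0 < \<phi> v p' \<and> Y v \<in> f (\<kappa> v) p'))"
    by (metis bchoice)
  then have YB: "\<And>v. v \<in> V \<Longrightarrow> Y v \<in> B"
    and Yf: "\<And>v p. v \<in> V \<Longrightarrow> p \<in> B \<Longrightarrow> 0 < \<phi> v p \<Longrightarrow> \<exists>p'\<in>B. 0 < \<phi> v p' \<and> Y v \<in> f (\<kappa> v) p'"
    by blast+
  obtain x where x: "x \<in> B" and \<Phi>_pos: "0 < (\<Sum>u\<in>V. \<phi> u x)"
    and fixed: "x = (\<Sum>v\<in>V. (\<phi> v x / (\<Sum>u\<in>V. \<phi> u x)) *\<^sub>R Y v)"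
    by (rule brouwer_partition_of_unity[OF B V(1) cont nonneg cover YB])
  obtain v where "v \<in> V" "0 < \<phi> v x" using cover[OF x] by blast
  then have "0 \<le> \<delta>" using small[of v x x] x by simp
  have active: "0 < \<phi> v x" if "v \<in> V" "\<phi> v x / (\<Sum>u\<in>V. \<phi> u x) \<noteq> 0" for v
    using that nonneg[OF _ x, of v] by auto
  have "(\<Sum>v\<in>V. (\<phi> v x / (\<Sum>u\<in>V. \<phi> u x)) *\<^sub>R Y v) \<in> geom_join I (\<lambda>i. \<Union>p\<in>B \<inter> cball x \<delta>. f i p)"
  proof (rule sum_scaleR_in_geom_join[OF V])
    show "u = v" if "u \<in> V" "v \<in> V" "\<kappa> u = \<kappa> v"
      "\<phi> u x / (\<Sum>u\<in>V. \<phi> u x) \<noteq> 0" "\<phi> v x / (\<Sum>u\<in>V. \<phi> u x) \<noteq> 0" for u v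
      using that active colour_unique[OF _ _ x] by blast
    show "Y v \<in> (\<Union>p\<in>B \<inter> cball x \<delta>. f (\<kappa> v) p)"
      if v: "v \<in> V" and w: "\<phi> v x / (\<Sum>u\<in>V. \<phi> u x) \<noteq> 0" for v
    proof -
      obtain p where "p \<in> B" "0 < \<phi> v p" "Y v \<in> f (\<kappa> v) p"
        using Yf[OF v x active[OF v w]] by blast
      moreover have "dist x p \<le> \<delta>"
        using small[OF v x \<open>p \<in> B\<close> active[OF v w] \<open>0 < \<phi> v p\<close>] .
      ultimately show ?thesis by auto
    qed
    show "(\<Union>p\<in>B \<inter> cball x \<delta>. f i p) \<noteq> {}" if "i \<in> I" for i
      using nonempty[OF that x] x \<open>0 \<le> \<delta>\<close> by auto
    show "(\<Sum>v\<in>V. \<phi> v x / (\<Sum>u\<in>V. \<phi> u x)) = 1"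
      using \<Phi>_pos by (simp add: sum_divide_distrib[symmetric])
  qed (use nonneg[OF _ x] \<Phi>_pos in auto)
  with x fixed show ?thesis by auto
qed

lemma mem_closed_graph_limit:
  assumes "closedin (top_of_set (B \<times> B)) {(x, y). x \<in> B \<and> y \<in> B \<and> y \<in> F x}" "closed B"
    and "\<And>m. p m \<in> B" "\<And>m. a m \<in> B" "\<And>m. a m \<in> F (p m)"
    and "p \<longlonglongrightarrow> x" "a \<longlonglongrightarrow> y"
  shows "y \<in> F x"
proof -
  have "closed {(x, y). x \<in> B \<and> y \<in> B \<and> y \<in> F x}"
    using closedin_closed_trans[OF assms(1)] \<open>closed B\<close> by (simp add: closed_Times)
  from closed_sequentially[OF this _ tendsto_Pair[OF \<open>p \<longlonglongrightarrow> x\<close> \<open>a \<longlonglongrightarrow> y\<close>]] assms(3-5)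
  show ?thesis by blast
qed

lemma join_fixpoint_of_convergent_approx:
  fixes B :: "'a::real_normed_vector set" and f :: "'i \<Rightarrow> 'a \<Rightarrow> 'a set"
  assumes "compact B" "finite I"
    and into: "\<And>i x. i \<in> I \<Longrightarrow> x \<in> B \<Longrightarrow> f i x \<subseteq> B"
    and closed_graph: "\<And>i. i \<in> I \<Longrightarrow>
        closedin (top_of_set (B \<times> B)) {(x, y). x \<in> B \<and> y \<in> B \<and> y \<in> f i x}"
    and T: "\<And>m i. i \<in> I \<Longrightarrow> 0 \<le> T m i" "\<And>m. sum (T m) I = 1"
    and P: "\<And>m i. i \<in> I \<Longrightarrow> P m i \<in> B" "\<And>m i. i \<in> I \<Longrightarrow> A m i \<in> f i (P m i)"
    and close: "\<And>i. i \<in> I \<Longrightarrow> (\<lambda>m. (\<Sum>j\<in>I. T m j *\<^sub>R A m j) - P m i) \<longlonglongrightarrow> 0"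
  shows "\<exists>x\<in>B. x \<in> geom_join I (\<lambda>i. f i x)"
proof -
  have TA_bound: "T m i \<in> {0..1} \<and> A m i \<in> B" if "i \<in> I" for m i
  proof
    show "T m i \<in> {0..1}"
      using T member_le_sum[of i I "T m"] that \<open>finite I\<close> by auto
    show "A m i \<in> B"
      using into[OF that P(1)[OF that]] P(2)[OF that] by blast
  qed
  obtain q l where q: "strict_mono q" and lK: "\<And>i. i \<in> I \<Longrightarrow> l i \<in> {0..1} \<times> B"
    and lim: "\<And>i. i \<in> I \<Longrightarrow> (\<lambda>m. (T (q m) i, A (q m) i)) \<longlonglongrightarrow> l i"
    by (rule finite_family_common_convergent_subseq[of I "{0..1} \<times> B" "\<lambda>i m. (T m i, A m i)"])
      (use \<open>finite I\<close> \<open>compact B\<close> TA_bound in \<open>auto simp: compact_Times\<close>)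
  define t where "t i = fst (l i)" for i
  define a where "a i = snd (l i)" for i
  define x where "x = (\<Sum>i\<in>I. t i *\<^sub>R a i)"
  have Tq: "(\<lambda>m. T (q m) i) \<longlonglongrightarrow> t i" and Aq: "(\<lambda>m. A (q m) i) \<longlonglongrightarrow> a i" if "i \<in> I" for i
    using tendsto_fst[OF lim[OF that]] tendsto_snd[OF lim[OF that]] by (simp_all add: t_def a_def)
  have Xq: "(\<lambda>m. \<Sum>j\<in>I. T (q m) j *\<^sub>R A (q m) j) \<longlonglongrightarrow> x"
    unfolding x_def using Tq Aq by (intro tendsto_sum tendsto_scaleR)
  have Pq: "(\<lambda>m. P (q m) i) \<longlonglongrightarrow> x" if "i \<in> I" for i
    using Lim_transform2[OF Xq] LIMSEQ_subseq_LIMSEQ[OF close[OF that] q] by (simp add: o_def)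
  obtain i where "i \<in> I" using T(2)[of 0] by fastforce
  then have "x \<in> B"
    using closed_sequentially[OF compact_imp_closed[OF \<open>compact B\<close>] _ Pq] P(1) by blast
  moreover have "a i \<in> f i x" if "i \<in> I" for i
    by (rule mem_closed_graph_limit[OF closed_graph[OF that] compact_imp_closed[OF \<open>compact B\<close>]
          _ _ _ Pq[OF that] Aq[OF that]])
      (use P TA_bound that in auto)
  moreover have "sum t I = 1"
  proof -
    have "(\<lambda>m. sum (T (q m)) I) \<longlonglongrightarrow> sum t I"
      using Tq by (intro tendsto_sum)
    then show ?thesis using T(2) by (simp add: LIMSEQ_const_iff)
  qed
  moreover have "0 \<le> t i" if "i \<in> I" for i
    using lK[OF that] by (auto simp: t_def)
  ultimately show ?thesis
    unfolding geom_join_def x_def by blast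
qed

lemma join_fixpoint_of_approx:
  fixes B :: "'a::real_normed_vector set" and f :: "'i \<Rightarrow> 'a \<Rightarrow> 'a set"
  assumes "compact B" "finite I"
    and into: "\<And>i x. i \<in> I \<Longrightarrow> x \<in> B \<Longrightarrow> f i x \<subseteq> B"
    and closed_graph: "\<And>i. i \<in> I \<Longrightarrow>
        closedin (top_of_set (B \<times> B)) {(x, y). x \<in> B \<and> y \<in> B \<and> y \<in> f i x}"
    and approx: "\<And>\<delta>. 0 < \<delta> \<Longrightarrow> \<exists>x\<in>B. x \<in> geom_join I (\<lambda>i. \<Union>p\<in>B \<inter> cball x \<delta>. f i p)"
  shows "\<exists>x\<in>B. x \<in> geom_join I (\<lambda>i. f i x)"
proof -
  define \<delta> where "\<delta> m = inverse (real (Suc m))" for m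
  have "\<exists>t a. (\<forall>i\<in>I. 0 \<le> t i \<and> (\<exists>p\<in>B \<inter> cball (\<Sum>j\<in>I. t j *\<^sub>R a j) (\<delta> m). a i \<in> f i p)) \<and>
      sum t I = 1" for m
  proof -
    obtain x where "x \<in> geom_join I (\<lambda>i. \<Union>p\<in>B \<inter> cball x (\<delta> m). f i p)"
      using approx[of "\<delta> m"] by (auto simp: \<delta>_def)
    then show ?thesis unfolding geom_join_def by auto
  qed
  then have "\<forall>m. \<exists>t a. (\<forall>i\<in>I. 0 \<le> t i \<and> (\<exists>p\<in>B \<inter> cball (\<Sum>j\<in>I. t j *\<^sub>R a j) (\<delta> m). a i \<in> f i p)) \<and>
      sum t I = 1" ..
  then obtain T where "\<forall>m. \<exists>a. (\<forall>i\<in>I. 0 \<le> T m i \<and>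
      (\<exists>p\<in>B \<inter> cball (\<Sum>j\<in>I. T m j *\<^sub>R a j) (\<delta> m). a i \<in> f i p)) \<and> sum (T m) I = 1"
    by (rule choice[THEN exE])
  then obtain A where TA: "\<forall>m. (\<forall>i\<in>I. 0 \<le> T m i \<and>
      (\<exists>p\<in>B \<inter> cball (\<Sum>j\<in>I. T m j *\<^sub>R A m j) (\<delta> m). A m i \<in> f i p)) \<and> sum (T m) I = 1"
    by (rule choice[THEN exE])
  have "\<forall>m. \<exists>Pm. \<forall>i\<in>I. Pm i \<in> B \<inter> cball (\<Sum>j\<in>I. T m j *\<^sub>R A m j) (\<delta> m) \<and> A m i \<in> f i (Pm i)"
    using TA by (intro allI bchoice) blast
  then obtain P where P: "\<forall>m. \<forall>i\<in>I. P m i \<in> B \<inter> cball (\<Sum>j\<in>I. T m j *\<^sub>R A m j) (\<delta> m) \<and>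
      A m i \<in> f i (P m i)"
    by (rule choice[THEN exE])
  show ?thesis
  proof (rule join_fixpoint_of_convergent_approx[OF assms(1-4), where T = T and P = P and A = A])
    show "(\<lambda>m. (\<Sum>j\<in>I. T m j *\<^sub>R A m j) - P m i) \<longlonglongrightarrow> 0" if "i \<in> I" for i
    proof (rule Lim_null_comparison[OF _ LIMSEQ_inverse_real_of_nat])
      show "\<forall>\<^sub>F m in sequentially. norm ((\<Sum>j\<in>I. T m j *\<^sub>R A m j) - P m i) \<le> inverse (real (Suc m))"
        using P that by (auto simp: \<delta>_def dist_norm)
    qed
  qed (use TA P in auto)
qed

lemma int_fun_eq_0_of_card_dvd_sum:
  fixes d :: "'n::finite \<Rightarrow> int"
  assumes small: "\<And>j. \<bar>d j\<bar> \<le> 1" and spread: "\<And>j k. \<bar>d j - d k\<bar> \<le> 1"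
    and dvd: "int (CARD('n) + 1) dvd (\<Sum>j\<in>UNIV. d j)"
  shows "d = (\<lambda>_. 0)"
proof -
  have "\<bar>\<Sum>j\<in>UNIV. d j\<bar> \<le> (\<Sum>j\<in>UNIV. \<bar>d j\<bar>)" by (rule sum_abs)
  also have "\<dots> \<le> int CARD('n)" using sum_mono[of UNIV "\<lambda>j. \<bar>d j\<bar>" "\<lambda>_. 1"] small by simp
  finally have bound: "\<bar>\<Sum>j\<in>UNIV. d j\<bar> < int (CARD('n) + 1)" by simp
  obtain q where q: "(\<Sum>j\<in>UNIV. d j) = int (CARD('n) + 1) * q" using dvd by blast
  have "q = 0"
  proof (rule ccontr)
    assume "q \<noteq> 0"
    then have "int (CARD('n) + 1) \<le> \<bar>int (CARD('n) + 1) * q\<bar>" by (simp add: abs_mult)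
    with bound q show False by simp
  qed
  with q have sum0: "(\<Sum>j\<in>UNIV. d j) = 0" by simp
  have "(\<forall>j. 0 \<le> d j) \<or> (\<forall>j. d j \<le> 0)"
  proof (rule ccontr)
    assume "\<not> ?thesis"
    then obtain j k where "\<not> 0 \<le> d j" "\<not> d k \<le> 0" by blast
    with spread[of k j] show False by linarith
  qed
  then show ?thesis
  proof
    assume "\<forall>j. 0 \<le> d j"
    with sum0 show ?thesis using sum_nonneg_eq_0_iff[of UNIV d] by auto
  next
    assume "\<forall>j. d j \<le> 0"
    moreover have "(\<Sum>j\<in>UNIV. - d j) = 0" using sum0 by (simp add: sum_negf)
    ultimately show ?thesis using sum_nonneg_eq_0_iff[of UNIV "\<lambda>j. - d j"] by auto
  qed
qed

text \<open>The Kuhn triangulation of mesh \<open>e\<close> has vertex set \<open>e \<int>\<^sup>n\<close>; with \<open>u = x/e - v\<close>, the open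
  star of the vertex \<open>e v\<close> consists of the points with \<open>|u\<^sub>j| < 1\<close> and \<open>|u\<^sub>j - u\<^sub>k| < 1\<close>.\<close>
definition kuhn_star :: "real \<Rightarrow> ('n::finite \<Rightarrow> int) \<Rightarrow> real^'n \<Rightarrow> bool" where
  "kuhn_star e v x \<longleftrightarrow>
     (\<forall>j. \<bar>x$j/e - v j\<bar> < 1) \<and> (\<forall>j k. \<bar>(x$j/e - v j) - (x$k/e - v k)\<bar> < 1)"

definition kuhn_bump :: "real \<Rightarrow> ('n::finite \<Rightarrow> int) \<Rightarrow> real^'n \<Rightarrow> real" where
  "kuhn_bump e v x =
     (\<Prod>j\<in>UNIV. max 0 (1 - \<bar>x$j/e - v j\<bar>)) *
     (\<Prod>j\<in>UNIV. \<Prod>k\<in>UNIV. max 0 (1 - \<bar>(x$j/e - v j) - (x$k/e - v k)\<bar>))"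

definition kuhn_colour :: "('n::finite \<Rightarrow> int) \<Rightarrow> nat" where
  "kuhn_colour v = nat ((\<Sum>j\<in>UNIV. v j) mod int (CARD('n) + 1)) + 1"

lemma kuhn_bump_nonneg: "0 \<le> kuhn_bump e v x"
  unfolding kuhn_bump_def by (intro mult_nonneg_nonneg prod_nonneg) auto

lemma kuhn_bump_pos_iff: "0 < kuhn_bump e v x \<longleftrightarrow> kuhn_star e v x"
proof -
  have tent_eq_0: "max 0 (1 - t) = 0 \<longleftrightarrow> 1 \<le> t" for t :: real
    by (auto simp: max_def)
  have "kuhn_bump e v x \<noteq> 0 \<longleftrightarrow> kuhn_star e v x"
    unfolding kuhn_bump_def kuhn_star_def by (auto simp: prod_zero_iff tent_eq_0 not_le)
  then show ?thesis using kuhn_bump_nonneg[of e v x] by linarith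
qed

lemma continuous_on_kuhn_bump: "e \<noteq> 0 \<Longrightarrow> continuous_on S (kuhn_bump e v)"
  unfolding kuhn_bump_def by (intro continuous_intros) auto

lemma kuhn_colour_in: "kuhn_colour (v :: 'n::finite \<Rightarrow> int) \<in> {1..CARD('n) + 1}"
proof -
  have "(\<Sum>j\<in>UNIV. v j) mod int (CARD('n) + 1) < int (CARD('n) + 1)" by simp
  then have "nat ((\<Sum>j\<in>UNIV. v j) mod int (CARD('n) + 1)) \<le> CARD('n)"
    by (subst nat_le_iff) linarith
  then show ?thesis unfolding kuhn_colour_def by simp
qed

lemma kuhn_star_floor: "kuhn_star e (\<lambda>j. \<lfloor>x$j/e\<rfloor>) x"
proof -
  have "0 \<le> x$j/e - \<lfloor>x$j/e\<rfloor> \<and> x$j/e - \<lfloor>x$j/e\<rfloor> < 1" for j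
    by linarith
  then show ?thesis unfolding kuhn_star_def by (smt (verit))
qed

lemma kuhn_star_colour_unique:
  fixes v w :: "'n::finite \<Rightarrow> int"
  assumes "kuhn_star e v x" "kuhn_star e w x" "kuhn_colour v = kuhn_colour w"
  shows "v = w"
proof -
  have "(\<lambda>j. v j - w j) = (\<lambda>_. 0)"
  proof (rule int_fun_eq_0_of_card_dvd_sum)
    show "\<bar>v j - w j\<bar> \<le> 1" for j
    proof -
      have "\<bar>x$j/e - v j\<bar> < 1" "\<bar>x$j/e - w j\<bar> < 1"
        using assms(1,2) unfolding kuhn_star_def by auto
      then have "\<bar>real_of_int (v j - w j)\<bar> < 2" by linarith
      then show ?thesis by linarith
    qed
    show "\<bar>(v j - w j) - (v k - w k)\<bar> \<le> 1" for j k
    proof -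
      have "\<bar>(x$j/e - v j) - (x$k/e - v k)\<bar> < 1" "\<bar>(x$j/e - w j) - (x$k/e - w k)\<bar> < 1"
        using assms(1,2) unfolding kuhn_star_def by auto
      then have "\<bar>real_of_int ((v j - w j) - (v k - w k))\<bar> < 2" by linarith
      then show ?thesis by linarith
    qed
    have "(\<Sum>j\<in>UNIV. v j) mod int (CARD('n) + 1) = (\<Sum>j\<in>UNIV. w j) mod int (CARD('n) + 1)"
      using assms(3) unfolding kuhn_colour_def by (simp add: eq_nat_nat_iff)
    then show "int (CARD('n) + 1) dvd (\<Sum>j\<in>UNIV. v j - w j)"
      by (simp add: sum_subtractf mod_eq_dvd_iff)
  qed
  then show ?thesis by (simp add: fun_eq_iff)
qed

lemma dist_le_of_kuhn_star:
  fixes x y :: "real^'n" and e :: real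
  assumes "0 < e" "kuhn_star e v x" "kuhn_star e v y"
  shows "dist x y \<le> 2 * real CARD('n) * e"
proof -
  have "\<bar>x$j - y$j\<bar> \<le> 2 * e" for j
  proof -
    have "\<bar>x$j/e - v j\<bar> < 1" "\<bar>y$j/e - v j\<bar> < 1"
      using assms(2,3) unfolding kuhn_star_def by auto
    then have "\<bar>x$j/e - y$j/e\<bar> \<le> 2" by linarith
    then have "\<bar>x$j - y$j\<bar> / e \<le> 2" using \<open>0 < e\<close> by (simp add: diff_divide_distrib[symmetric] abs_divide)
    then show ?thesis using \<open>0 < e\<close> by (simp add: divide_le_eq)
  qed
  then have "(\<Sum>j\<in>UNIV. \<bar>(x - y)$j\<bar>) \<le> CARD('n) * (2 * e)"
    using sum_mono[of UNIV "\<lambda>j. \<bar>(x - y)$j\<bar>" "\<lambda>_. 2 * e"] by simp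
  then show ?thesis
    using norm_le_l1_cart[of "x - y"] by (simp add: dist_norm)
qed

lemma floor_scaled_component_bounds:
  fixes x :: "real^'n"
  assumes "norm x \<le> R" "0 < e"
  shows "- \<lceil>R / e\<rceil> \<le> \<lfloor>x$j / e\<rfloor> \<and> \<lfloor>x$j / e\<rfloor> \<le> \<lceil>R / e\<rceil>"
proof -
  have "\<bar>x$j / e\<bar> \<le> R / e"
    using component_le_norm_cart[of x j] assms by (simp add: abs_divide divide_right_mono)
  also have "\<dots> \<le> \<lceil>R / e\<rceil>" by (rule le_of_int_ceiling)
  finally have "of_int (- \<lceil>R / e\<rceil>) \<le> x$j / e" "x$j / e \<le> of_int \<lceil>R / e\<rceil>"
    by linarith+
  then show ?thesis by (metis floor_mono floor_of_int)
qed

lemma join_approx_cart: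
  fixes B :: "(real^'n) set" and f :: "nat \<Rightarrow> real^'n \<Rightarrow> (real^'n) set"
  assumes B: "compact B" "convex B" "B \<noteq> {}" and "0 < \<delta>"
    and nonempty: "\<And>i x. i \<in> {1..CARD('n) + 1} \<Longrightarrow> x \<in> B \<Longrightarrow> f i x \<noteq> {}"
    and into: "\<And>i x. i \<in> {1..CARD('n) + 1} \<Longrightarrow> x \<in> B \<Longrightarrow> f i x \<subseteq> B"
  shows "\<exists>x\<in>B. x \<in> geom_join {1..CARD('n) + 1} (\<lambda>i. \<Union>p\<in>B \<inter> cball x \<delta>. f i p)"
proof -
  define e where "e = \<delta> / (2 * CARD('n))"
  have "0 < e" using \<open>0 < \<delta>\<close> by (simp add: e_def)
  obtain R where R: "\<And>x. x \<in> B \<Longrightarrow> norm x \<le> R"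
    using compact_imp_bounded[OF B(1)] by (auto simp: bounded_iff)
  define K where "K = \<lceil>R / e\<rceil>"
  define V where "V = {v :: 'n \<Rightarrow> int. \<forall>j. v j \<in> {-K..K}}"
  have "V = PiE UNIV (\<lambda>_. {-K..K})"
    unfolding V_def PiE_UNIV_domain by (auto simp: Pi_def)
  then have "finite V" by (simp add: finite_PiE)
  have floor_in_V: "(\<lambda>j. \<lfloor>x$j/e\<rfloor>) \<in> V" if "x \<in> B" for x
    using floor_scaled_component_bounds[OF R[OF that] \<open>0 < e\<close>] unfolding V_def K_def by simp
  show ?thesis
  proof (rule join_approx_of_coloured_partition[where \<phi> = "kuhn_bump e" and \<kappa> = kuhn_colour and V = V])
    show "kuhn_colour ` V \<subseteq> {1..CARD('n) + 1}" using kuhn_colour_in by blast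
    show "continuous_on B (kuhn_bump e v)" for v
      using \<open>0 < e\<close> by (simp add: continuous_on_kuhn_bump)
    show "\<exists>v\<in>V. 0 < kuhn_bump e v x" if "x \<in> B" for x
      using floor_in_V[OF that] kuhn_star_floor kuhn_bump_pos_iff by blast
    show "v = w" if "kuhn_colour v = kuhn_colour w" "0 < kuhn_bump e v x" "0 < kuhn_bump e w x"
      for v w x
      using that kuhn_star_colour_unique by (auto simp: kuhn_bump_pos_iff)
    show "dist x y \<le> \<delta>" if "0 < kuhn_bump e v x" "0 < kuhn_bump e v y" for v and x y :: "real^'n"
    proof -
      have "dist x y \<le> 2 * real CARD('n) * e"
        using dist_le_of_kuhn_star[OF \<open>0 < e\<close>, of v x y] that by (simp add: kuhn_bump_pos_iff)
      then show ?thesis by (simp add: e_def)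
    qed
  qed (use B \<open>finite V\<close> nonempty into kuhn_bump_nonneg in simp_all)
qed

theorem theorem5p4:
  fixes c :: "real ^ 'n" and r :: real
    and f :: "nat \<Rightarrow> real ^ 'n \<Rightarrow> (real ^ 'n) set"
  assumes r_pos: "0 < r"
    and nonempty: "\<And>i x. i \<in> {1..CARD('n) + 1} \<Longrightarrow> x \<in> cball c r \<Longrightarrow> f i x \<noteq> {}"
    and into_ball: "\<And>i x. i \<in> {1..CARD('n) + 1} \<Longrightarrow> x \<in> cball c r \<Longrightarrow> f i x \<subseteq> cball c r"
    and closed_graph: "\<And>i. i \<in> {1..CARD('n) + 1} \<Longrightarrow>
        closedin (top_of_set (cball c r \<times> cball c r))
          {(x, y). x \<in> cball c r \<and> y \<in> cball c r \<and> y \<in> f i x}"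
  shows "\<exists>x\<in>cball c r. x \<in> geom_join {1..CARD('n) + 1} (\<lambda>i. f i x)"
proof (rule join_fixpoint_of_approx[OF _ _ into_ball closed_graph])
  show "\<exists>x\<in>cball c r. x \<in> geom_join {1..CARD('n) + 1} (\<lambda>i. \<Union>p\<in>cball c r \<inter> cball x \<delta>. f i p)"
    if "0 < \<delta>" for \<delta>
    using join_approx_cart[OF _ _ _ that nonempty into_ball] r_pos by auto
qed auto

end
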